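(* As $2$-cochains on $PSL(2,\mathbb{Z})$, $\delta\Phi=-12\,\delta(rot)$; that is, for all $g_1,g_2\in PSL(2,\mathbb{Z})$ and any lifts $\tilde g_1,\tilde g_2\in B_3$, $$\Phi(g_1)+\Phi(g_2)-\Phi(g_1g_2)=-12\big(rot(\tilde g_1)+rot(\tilde g_2)-rot(\tilde g_1\tilde g_2)\big).$$
   Context: $B_3$ is the braid group with standard generators $\sigma_1,\sigma_2$, mapped onto $PSL(2,\mathbb{Z})$ by $\sigma_1\mapsto \pm\begin{pmatrix}1&0\\-1&1\end{pmatrix}$, $\sigma_2\mapsto \pm\begin{pmatrix}1&1\\0&1\end{pmatrix}$ (kernel generated by $(\sigma_1\sigma_2\sigma_1)^2$); $\bar\sigma$ denotes the image. Rademacher function: with $A=\pm\begin{pmatrix}0&1\\-1&0\end{pmatrix}$, $B=\pm\begin{pmatrix}1&-1\\1&0\end{pmatrix}$, $PSL(2,\mathbb{Z})=\langle A\rangle *\langle B\rangle\cong\mathbb{Z}/2*\mathbb{Z}/3$, every $g$ is uniquely $B^{r_1}AB^{r_2}A\cdots AB^{r_k}$ with $r_1,r_k\in\{-1,0,1\}$ and $r_i\in\{-1,1\}$ otherwise; $\Phi(g)=\sum_i r_i$. Rotation number on $B_3$: for $g=\pm\begin{pmatrix}\alpha&\beta\\ \gamma&\delta\end{pmatrix}$ put $a=\gamma/\alpha$, $b=\delta/\beta\in\mathbb{Q}\cup\{\infty\}$ ($\infty$ read as $\pm\infty$ as needed). For $g=\bar\sigma$ one of the following holds, and $\sigma$ is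 written uniquely as $(\sigma_1\sigma_2\sigma_1)^k w$ accordingly: (1) $0\le a<b\le+\infty$: $k$ even, $w$ a word in $\sigma_1^{-1},\sigma_2$ only; (2) $-\infty\le a<b\le 0$: $k$ odd, $w$ a word in $\sigma_1^{-1},\sigma_2$; (3) $0\le b<a\le+\infty$: $k$ odd, $w$ a word in $\sigma_1,\sigma_2^{-1}$; (4) $-\infty\le b<a\le 0$: $k$ even, $w$ a word in $\sigma_1,\sigma_2^{-1}$. Then $rot(\sigma)=k/4$. The expression $rot(\tilde g_1)+rot(\tilde g_2)-rot(\tilde g_1\tilde g_2)$ does not depend on the choice of lifts. *)

theory Defs
  imports Complex_Main "HOL-Library.Extended_Real"
begin

text \<open>A matrix (alpha, beta, gamma, delta) stands for [[alpha, beta],[gamma, delta]].\<close>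
type_synonym mat2 = "int \<times> int \<times> int \<times> int"

fun mmul :: "mat2 \<Rightarrow> mat2 \<Rightarrow> mat2" where
  "mmul (a, b, c, d) (a', b', c', d') =
     (a * a' + b * c', a * b' + b * d', c * a' + d * c', c * b' + d * d')"

definition mid :: mat2 where "mid = (1, 0, 0, 1)"

fun mneg :: "mat2 \<Rightarrow> mat2" where
  "mneg (a, b, c, d) = (-a, -b, -c, -d)"

fun mdet :: "mat2 \<Rightarrow> int" where
  "mdet (a, b, c, d) = a * d - b * c"

text \<open>Equality in PSL(2,Z): equality up to sign.\<close>
definition pm_eq :: "mat2 \<Rightarrow> mat2 \<Rightarrow> bool" where
  "pm_eq M N \<longleftrightarrow> M = N \<or> M = mneg N"

text \<open>Letters: 1 = sigma_1, -1 = sigma_1^{-1}, 2 = sigma_2, -2 = sigma_2^{-1}.\<close>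
definition braid_word :: "int list \<Rightarrow> bool" where
  "braid_word w \<longleftrightarrow> set w \<subseteq> {1, -1, 2, -2}"

inductive braid_basic :: "int list \<Rightarrow> int list \<Rightarrow> bool" where
  cancel1: "i \<in> {1, -1, 2, -2} \<Longrightarrow> braid_basic [i, -i] []"
| braid: "braid_basic [1, 2, 1] [2, 1, 2]"

text \<open>Equality in B_3: the congruence generated by free cancellation and the braid relation.\<close>
inductive braid_eq :: "int list \<Rightarrow> int list \<Rightarrow> bool" where
  refl: "braid_eq w w"
| step: "braid_basic x y \<Longrightarrow> braid_eq (u @ x @ v) (u @ y @ v)"
| sym: "braid_eq w w' \<Longrightarrow> braid_eq w' w"
| trans: "braid_eq w w' \<Longrightarrow> braid_eq w' w'' \<Longrightarrow> braid_eq w w''"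

definition delta_pow :: "int \<Rightarrow> int list" where
  "delta_pow k = (if k \<ge> 0 then concat (replicate (nat k) [1, 2, 1])
                  else concat (replicate (nat (-k)) [-1, -2, -1]))"

text \<open>Image of a letter in SL(2,Z) (lifting the map B_3 -> PSL(2,Z)).\<close>
fun letter_mat :: "int \<Rightarrow> mat2" where
  "letter_mat i =
    (if i = 1 then (1, 0, -1, 1) else if i = -1 then (1, 0, 1, 1)
     else if i = 2 then (1, 1, 0, 1) else if i = -2 then (1, -1, 0, 1) else mid)"

definition braid_img :: "int list \<Rightarrow> mat2" where
  "braid_img w = foldr (\<lambda>i M. mmul (letter_mat i) M) w mid"

definition matA :: mat2 where "matA = (0, 1, -1, 0)"
definition matB :: mat2 where "matB = (1, -1, 1, 0)"
definition matBinv :: mat2 where "matBinv = (0, 1, -1, 1)"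

definition Bpow :: "int \<Rightarrow> mat2" where
  "Bpow r = (if r \<ge> 0 then (mmul matB ^^ nat r) mid else (mmul matBinv ^^ nat (-r)) mid)"

fun rad_word :: "int list \<Rightarrow> mat2" where
  "rad_word [] = mid"
| "rad_word [r] = Bpow r"
| "rad_word (r # rs) = mmul (Bpow r) (mmul matA (rad_word rs))"

definition rad_valid :: "int list \<Rightarrow> bool" where
  "rad_valid rs \<longleftrightarrow> rs \<noteq> [] \<and> hd rs \<in> {-1, 0, 1} \<and> last rs \<in> {-1, 0, 1}
     \<and> (\<forall>i. 0 < i \<and> i < length rs - 1 \<longrightarrow> rs ! i \<in> {-1, 1})"

definition Rademacher :: "mat2 \<Rightarrow> int" where
  "Rademacher g = (THE s. \<exists>rs. rad_valid rs \<and> pm_eq (rad_word rs) g \<and> s = sum_list rs)"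

text \<open>The possible values of p/q in Q \<union> {\<infinity>}, where \<infinity> may be read as +\<infinity> or -\<infinity>.\<close>
definition qvals :: "int \<Rightarrow> int \<Rightarrow> ereal set" where
  "qvals p q = (if q \<noteq> 0 then {ereal (real_of_int p / real_of_int q)} else {\<infinity>, -\<infinity>})"

fun rot_case :: "nat \<Rightarrow> mat2 \<Rightarrow> bool" where
  "rot_case n (\<alpha>, \<beta>, \<gamma>, \<delta>) =
     (\<exists>a \<in> qvals \<gamma> \<alpha>. \<exists>b \<in> qvals \<delta> \<beta>.
        (n = 1 \<and> 0 \<le> a \<and> a < b \<and> b \<le> \<infinity>) \<or>
        (n = 2 \<and> -\<infinity> \<le> a \<and> a < b \<and> b \<le> 0) \<or>
        (n = 3 \<and> 0 \<le> b \<and> b < a \<and> a \<le> \<infinity>) \<or>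
        (n = 4 \<and> -\<infinity> \<le> b \<and> b < a \<and> a \<le> 0))"

definition rot :: "int list \<Rightarrow> real" where
  "rot \<sigma> = real_of_int (THE k. \<exists>w. braid_eq \<sigma> (delta_pow k @ w) \<and>
      ((rot_case 1 (braid_img \<sigma>) \<and> even k \<and> set w \<subseteq> {-1, 2}) \<or>
       (rot_case 2 (braid_img \<sigma>) \<and> odd k \<and> set w \<subseteq> {-1, 2}) \<or>
       (rot_case 3 (braid_img \<sigma>) \<and> odd k \<and> set w \<subseteq> {1, -2}) \<or>
       (rot_case 4 (braid_img \<sigma>) \<and> even k \<and> set w \<subseteq> {1, -2}))) / 4"

end

theory Submission
  imports Defs
begin

(*
  Every 3-braid equals \<Delta>\<^sup>k w with \<Delta> = \<sigma>\<^sub>1\<sigma>\<^sub>2\<sigma>\<^sub>1 and w a word either in \<sigma>\<^sub>1\<^sup>-\<^sup>1, \<sigma>\<^sub>2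
  or in \<sigma>\<^sub>1, \<sigma>\<^sub>2\<^sup>-\<^sup>1: two adjacent letters of different kinds either cancel or combine into
  \<Delta> or \<Delta>\<^sup>-\<^sup>1 next to a single letter, and \<Delta> moves to the front because conjugation by \<Delta>
  swaps \<sigma>\<^sub>1 and \<sigma>\<^sub>2. Up to sign, \<Delta> maps to A, the letters \<sigma>\<^sub>2, \<sigma>\<^sub>1\<^sup>-\<^sup>1 map to B A,
  B\<^sup>-\<^sup>1 A and the letters \<sigma>\<^sub>1, \<sigma>\<^sub>2\<^sup>-\<^sup>1 to A B, A B\<^sup>-\<^sup>1. Hence the Rademacher normal form of
  the image of \<Delta>\<^sup>k w can be written down letter by letter, and \<Phi> of it is the exponent
  sum e(w). As e(\<Delta>\<^sup>k w) = 3k + e(w) and rot = k/4, this gives \<Phi>(\<sigma>) = e(\<sigma>) - 12 rot(\<sigma>);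
  the exponent sum is a homomorphism, so its coboundary vanishes.

  \<Phi> and rot are both definite descriptions. \<Phi> is well defined because the nonnegative
  matrices in SL(2,\<int>) form a free monoid on (1,0,1,1) and (1,1,0,1); then the k in the
  definition of rot is unique because 3k = e(\<sigma>) - \<Phi>(\<sigma>).
*)

(* The letters of w in cases (1), (2) resp. (3), (4) of the definition of rot; the images of
   pos_letters are nonnegative matrices. *)
abbreviation letters :: "int set" where "letters \<equiv> {1, -1, 2, -2}"

abbreviation pos_letters :: "int set" where "pos_letters \<equiv> {-1, 2}"

abbreviation neg_letters :: "int set" where "neg_letters \<equiv> {1, -2}"

definition one_signed :: "int list \<Rightarrow> bool" where
  "one_signed w \<longleftrightarrow> set w \<subseteq> pos_letters \<or> set w \<subseteq> neg_letters"

lemma braid_eq_trans [trans]: "braid_eq u v \<Longrightarrow> braid_eq v w \<Longrightarrow> braid_eq u w"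
  by (rule braid_eq.trans)

lemma braid_eq_context: "braid_eq u v \<Longrightarrow> braid_eq (p @ u @ q) (p @ v @ q)"
proof (induction rule: braid_eq.induct)
  case (step x y u v)
  from braid_eq.step[OF step, of "p @ u" "v @ q"] show ?case by simp
qed (auto intro: braid_eq.intros)

lemma braid_eq_append: "braid_eq u u' \<Longrightarrow> braid_eq v v' \<Longrightarrow> braid_eq (u @ v) (u' @ v')"
  using braid_eq_context[of u u' "[]" v] braid_eq_context[of v v' u' "[]"]
  by (auto intro: braid_eq.trans)

lemma braid_eq_cancel: "i \<in> letters \<Longrightarrow> braid_eq (u @ [i, -i] @ v) (u @ v)"
  using braid_eq.step[OF braid_basic.cancel1] by fastforce

lemma braid_eq_insert_cancel: "i \<in> letters \<Longrightarrow> braid_eq (u @ v) (u @ [i, -i] @ v)"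
  by (rule braid_eq.sym, rule braid_eq_cancel)

lemma braid_eq_delta_inverse:
  "braid_eq (delta_pow 1 @ delta_pow (-1)) []" "braid_eq (delta_pow (-1) @ delta_pow 1) []"
proof -
  have "braid_eq [1,2,1,-1,-2,-1] [1,2,-2,-1]"
    using braid_eq_cancel[of 1 "[1,2]" "[-2,-1]"] by simp
  also have "braid_eq [1,2,-2,-1] [1,-1]"
    using braid_eq_cancel[of 2 "[1]" "[-1]"] by simp
  also have "braid_eq [1,-1] []"
    using braid_eq_cancel[of 1 "[]" "[]"] by simp
  finally show "braid_eq (delta_pow 1 @ delta_pow (-1)) []" by (simp add: delta_pow_def)
  have "braid_eq [-1,-2,-1,1,2,1] [-1,-2,2,1]"
    using braid_eq_cancel[of "-1" "[-1,-2]" "[2,1]"] by simp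
  also have "braid_eq [-1,-2,2,1] [-1,1]"
    using braid_eq_cancel[of "-2" "[-1]" "[1]"] by simp
  also have "braid_eq [-1,1] []"
    using braid_eq_cancel[of "-1" "[]" "[]"] by simp
  finally show "braid_eq (delta_pow (-1) @ delta_pow 1) []" by (simp add: delta_pow_def)
qed

lemma braid_eq_move_inverses:
  assumes "braid_eq (a @ x) (y @ b)" "braid_eq (a' @ a) []" "braid_eq (b @ b') []"
  shows "braid_eq (x @ b') (a' @ y)"
proof -
  have "braid_eq (x @ b') ((a' @ a) @ x @ b')"
    using braid_eq_append[OF braid_eq.sym[OF assms(2)] braid_eq.refl] by simp
  also have "braid_eq ((a' @ a) @ x @ b') (a' @ (y @ b) @ b')"
    using braid_eq_context[OF assms(1), of a' b'] by simp
  also have "braid_eq (a' @ (y @ b) @ b') (a' @ y)"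
    using braid_eq_context[OF assms(3), of "a' @ y" "[]"] by simp
  finally show ?thesis .
qed

lemma concat_replicate_append_same: "concat (replicate n xs) @ xs = xs @ concat (replicate n xs)"
  by (induction n) auto

lemma delta_pow_add_one: "0 \<le> k \<Longrightarrow> delta_pow (k + 1) = delta_pow k @ delta_pow 1"
  by (simp add: delta_pow_def nat_add_distrib concat_replicate_append_same)

lemma delta_pow_diff_one: "k \<le> 0 \<Longrightarrow> delta_pow (k - 1) = delta_pow k @ delta_pow (-1)"
proof -
  assume "k \<le> 0"
  then have "nat (1 - k) = Suc (nat (- k))" by simp
  with \<open>k \<le> 0\<close> show ?thesis by (simp add: delta_pow_def concat_replicate_append_same)
qed

lemma delta_pow_append_unit:
  assumes "e \<in> {-1, 1}"
  shows "braid_eq (delta_pow k @ delta_pow e) (delta_pow (k + e))"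
proof (cases "e = 1")
  case True
  show ?thesis
  proof (cases "0 \<le> k")
    case False
    then have "delta_pow k = delta_pow (k + 1) @ delta_pow (-1)"
      using delta_pow_diff_one[of "k + 1"] by simp
    then show ?thesis
      using True braid_eq_context[OF braid_eq_delta_inverse(2), of "delta_pow (k + 1)" "[]"] by simp
  qed (simp add: True delta_pow_add_one braid_eq.refl)
next
  case False
  with assms have e: "e = -1" by simp
  show ?thesis
  proof (cases "k \<le> 0")
    case False
    then have "delta_pow k = delta_pow (k - 1) @ delta_pow 1"
      using delta_pow_add_one[of "k - 1"] by simp
    then show ?thesis
      using e braid_eq_context[OF braid_eq_delta_inverse(1), of "delta_pow (k - 1)" "[]"] by simp
  qed (simp add: e delta_pow_diff_one braid_eq.refl)
qed

definition exp_sum :: "int list \<Rightarrow> int" where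
  "exp_sum w = sum_list (map sgn w)"

lemma exp_sum_simps [simp]:
  "exp_sum [] = 0" "exp_sum (i # w) = sgn i + exp_sum w" "exp_sum (u @ v) = exp_sum u + exp_sum v"
  by (simp_all add: exp_sum_def)

lemma braid_eq_imp_exp_sum_eq: "braid_eq u v \<Longrightarrow> exp_sum u = exp_sum v"
proof (induction rule: braid_eq.induct)
  case (step x y u v)
  then show ?case
    by (induction rule: braid_basic.induct) auto
qed simp_all

lemma exp_sum_delta_pow: "exp_sum (delta_pow k) = 3 * k"
proof -
  have "exp_sum (concat (replicate n x)) = int n * exp_sum x" for n x
    by (induction n) (simp_all add: algebra_simps)
  then show ?thesis by (simp add: delta_pow_def)
qed

section \<open>The normal form \<Delta>^k w\<close>

definition flip_letter :: "int \<Rightarrow> int" where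
  "flip_letter i = sgn i * (3 - \<bar>i\<bar>)"

lemma flip_letter_simps [simp]:
  "flip_letter 1 = 2" "flip_letter 2 = 1" "flip_letter (-1) = -2" "flip_letter (-2) = -1"
  by (simp_all add: flip_letter_def)

lemma letter_delta_commute:
  "i \<in> letters \<Longrightarrow> braid_eq ([i] @ delta_pow 1) (delta_pow 1 @ [flip_letter i])"
proof -
  have pos: "braid_eq ([1] @ [1,2,1]) ([1,2,1] @ [2])" "braid_eq ([2] @ [1,2,1]) ([1,2,1] @ [1])"
    using braid_eq.step[OF braid_basic.braid, of "[1]" "[]"]
      braid_eq.sym[OF braid_eq.step[OF braid_basic.braid, of "[]" "[1]"]] by simp_all
  have neg: "braid_eq ([-j] @ [1,2,1]) ([1,2,1] @ [-i])"
    if "braid_eq ([j] @ [1,2,1]) ([1,2,1] @ [i])" "i \<in> {1, 2}" "j \<in> {1, 2}" for i j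
  proof (rule braid_eq.sym, rule braid_eq_move_inverses[OF that(1)])
    show "braid_eq ([-j] @ [j]) []" using braid_eq_cancel[of "-j" "[]" "[]"] that(3) by auto
    show "braid_eq ([i] @ [-i]) []" using braid_eq_cancel[of i "[]" "[]"] that(2) by auto
  qed
  assume "i \<in> letters"
  then show ?thesis
    using pos neg[OF pos(1)] neg[OF pos(2)] by (auto simp: delta_pow_def)
qed

lemma word_delta_commute:
  "set x \<subseteq> letters \<Longrightarrow> braid_eq (x @ delta_pow 1) (delta_pow 1 @ map flip_letter x)"
proof (induction x)
  case (Cons i x)
  then have "braid_eq ([i] @ x @ delta_pow 1) ([i] @ delta_pow 1 @ map flip_letter x)"
    using braid_eq_context[of _ _ "[i]" "[]"] by simp
  also have "braid_eq \<dots> (delta_pow 1 @ [flip_letter i] @ map flip_letter x)"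
    using braid_eq_append[OF letter_delta_commute braid_eq.refl] Cons.prems by simp
  finally show ?case by simp
qed (simp add: braid_eq.refl)

lemma word_delta_pow_commute:
  assumes "e \<in> {-1, 1}" "set x \<subseteq> letters"
  shows "braid_eq (x @ delta_pow e) (delta_pow e @ map flip_letter x)"
proof (cases "e = 1")
  case False
  have "map flip_letter (map flip_letter x) = x"
    using assms(2) by (induction x) auto
  moreover have "set (map flip_letter x) \<subseteq> letters"
    using assms(2) by auto
  ultimately have "braid_eq (delta_pow 1 @ x) (map flip_letter x @ delta_pow 1)"
    using word_delta_commute braid_eq.sym by metis
  from braid_eq_move_inverses[OF this braid_eq_delta_inverse(2,1)] False assms(1)
  show ?thesis by simp
qed (use word_delta_commute assms in simp)

lemma braid_eq_absorb_delta:
  assumes "braid_eq u (x @ delta_pow e @ t)" "e \<in> {-1, 1}" "set x \<subseteq> letters"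
  shows "braid_eq (delta_pow k @ u) (delta_pow (k + e) @ map flip_letter x @ t)"
proof -
  have "braid_eq (delta_pow k @ u) (delta_pow k @ (x @ delta_pow e) @ t)"
    using braid_eq_context[OF assms(1), of "delta_pow k" "[]"] by simp
  also have "braid_eq \<dots> ((delta_pow k @ delta_pow e) @ map flip_letter x @ t)"
    using braid_eq_context[OF word_delta_pow_commute[OF assms(2,3)], of "delta_pow k" t] by simp
  also have "braid_eq \<dots> (delta_pow (k + e) @ map flip_letter x @ t)"
    using braid_eq_append[OF delta_pow_append_unit[OF assms(2)] braid_eq.refl] .
  finally show ?thesis .
qed

(* Either l, i cancel, or l i equals y \<Delta>\<^sup>e t with e = 1 or e = -1 and a single letter in
   y @ t; moving \<Delta>\<^sup>e to the front flips w0 @ y into the sign class of t. *)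
lemma one_signed_sign_change:
  assumes w0: "set (w0 @ [l]) \<subseteq> pos_letters \<and> i \<in> neg_letters \<or>
               set (w0 @ [l]) \<subseteq> neg_letters \<and> i \<in> pos_letters"
  shows "\<exists>k' w'. braid_eq (delta_pow k @ w0 @ [l, i]) (delta_pow k' @ w') \<and> one_signed w'"
proof -
  have w0_letters: "set w0 \<subseteq> letters" using w0 by auto
  have absorb: "\<exists>k' w'. braid_eq (delta_pow k @ w0 @ [l, i]) (delta_pow k' @ w') \<and> one_signed w'"
    if "braid_eq [l, i] (y @ delta_pow e @ t)" "e \<in> {-1, 1}" "set y \<subseteq> letters"
       "one_signed (map flip_letter (w0 @ y) @ t)" for y e t
  proof -
    have "braid_eq (w0 @ [l, i]) ((w0 @ y) @ delta_pow e @ t)"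
      using braid_eq_context[OF that(1), of w0 "[]"] by simp
    from braid_eq_absorb_delta[OF this that(2)] w0_letters that(3,4) show ?thesis by auto
  qed
  have flip_pos: "set (map flip_letter y) \<subseteq> neg_letters" if "set y \<subseteq> pos_letters" for y
    using that by auto
  have flip_neg: "set (map flip_letter y) \<subseteq> pos_letters" if "set y \<subseteq> neg_letters" for y
    using that by auto
  from w0 consider "i = - l" | "l = 2" "i = 1" | "l = -1" "i = -2"
    | "l = -2" "i = -1" | "l = 1" "i = 2"
    by auto
  then show ?thesis
  proof cases
    case 1
    then have "braid_eq (delta_pow k @ w0 @ [l, i]) (delta_pow k @ w0)"
      using braid_eq_cancel[of l "delta_pow k @ w0" "[]"] w0 by auto
    with w0 show ?thesis by (auto simp: one_signed_def)
  next
    case 2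
    then have "braid_eq [l, i] ([-1] @ delta_pow 1 @ [])"
      using braid_eq_insert_cancel[of "-1" "[]" "[2, 1]"] by (simp add: delta_pow_def)
    from absorb[OF this] w0 2 flip_pos[of "w0 @ [-1]"] show ?thesis by (simp add: one_signed_def)
  next
    case 3
    then have "braid_eq [l, i] ([] @ delta_pow (-1) @ [1])"
      using braid_eq_insert_cancel[of "-1" "[-1, -2]" "[]"] by (simp add: delta_pow_def)
    from absorb[OF this] w0 3 flip_pos[of w0] show ?thesis by (simp add: one_signed_def)
  next
    case 4
    then have "braid_eq [l, i] ([1] @ delta_pow (-1) @ [])"
      using braid_eq_insert_cancel[of 1 "[]" "[-2, -1]"] by (simp add: delta_pow_def)
    from absorb[OF this] w0 4 flip_neg[of "w0 @ [1]"] show ?thesis by (simp add: one_signed_def)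
  next
    case 5
    then have "braid_eq [l, i] ([] @ delta_pow 1 @ [-1])"
      using braid_eq_insert_cancel[of 1 "[1, 2]" "[]"] by (simp add: delta_pow_def)
    from absorb[OF this] w0 5 flip_neg[of w0] show ?thesis by (simp add: one_signed_def)
  qed
qed

lemma braid_normal_form:
  "set s \<subseteq> letters \<Longrightarrow> \<exists>k w. braid_eq s (delta_pow k @ w) \<and> one_signed w"
proof (induction s rule: rev_induct)
  case Nil
  show ?case
    by (intro exI[of _ 0] exI[of _ "[]"]) (simp add: one_signed_def delta_pow_def braid_eq.refl)
next
  case (snoc i s)
  then obtain k w where "braid_eq s (delta_pow k @ w)" and w: "one_signed w" by auto
  then have s_i: "braid_eq (s @ [i]) (delta_pow k @ w @ [i])"
    using braid_eq_append[OF _ braid_eq.refl] by fastforce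
  show ?case
  proof (cases "one_signed (w @ [i])")
    case True
    with s_i show ?thesis by blast
  next
    case False
    then obtain w0 l where "w = w0 @ [l]"
      using w snoc.prems by (cases w rule: rev_cases) (auto simp: one_signed_def)
    with False w snoc.prems obtain k' w'
      where "braid_eq (delta_pow k @ w @ [i]) (delta_pow k' @ w')" "one_signed w'"
      using one_signed_sign_change[of w0 l i k] by (auto simp: one_signed_def)
    with s_i show ?thesis by (blast intro: braid_eq.trans)
  qed
qed

section \<open>Images in SL(2,\<int>)\<close>

lemma mmul_assoc: "mmul (mmul L M) N = mmul L (mmul M N)"
  by (cases L rule: prod_cases4; cases M rule: prod_cases4; cases N rule: prod_cases4)
    (simp add: algebra_simps)

lemma mmul_mid [simp]: "mmul mid M = M" "mmul M mid = M"
  by (cases M rule: prod_cases4, simp add: mid_def)+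

lemma mneg_mneg [simp]: "mneg (mneg M) = M"
  by (cases M rule: prod_cases4) simp

lemma mneg_eq_iff [simp]: "mneg M = mneg N \<longleftrightarrow> M = N"
  by (metis mneg_mneg)

lemma mmul_mneg [simp]: "mmul (mneg M) N = mneg (mmul M N)" "mmul M (mneg N) = mneg (mmul M N)"
  by (cases M rule: prod_cases4; cases N rule: prod_cases4; simp)+

lemma mdet_mmul: "mdet (mmul M N) = mdet M * mdet N"
  by (cases M rule: prod_cases4; cases N rule: prod_cases4) (simp add: algebra_simps)

lemma pm_eq_refl [simp]: "pm_eq M M"
  by (simp add: pm_eq_def)

lemma pm_eq_sym: "pm_eq M N \<Longrightarrow> pm_eq N M"
  by (auto simp: pm_eq_def)

lemma pm_eq_trans: "pm_eq L M \<Longrightarrow> pm_eq M N \<Longrightarrow> pm_eq L N"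
  unfolding pm_eq_def by (metis mneg_mneg)

lemma pm_eq_mneg [simp]: "pm_eq (mneg M) N = pm_eq M N" "pm_eq M (mneg N) = pm_eq M N"
  by (auto simp: pm_eq_def)

lemma pm_eq_mmul: "pm_eq M N \<Longrightarrow> pm_eq M' N' \<Longrightarrow> pm_eq (mmul M M') (mmul N N')"
  by (auto simp: pm_eq_def)

declare letter_mat.simps [simp del]

lemma letter_mat_simps [simp]:
  "letter_mat 1 = (1, 0, -1, 1)" "letter_mat (-1) = (1, 0, 1, 1)"
  "letter_mat 2 = (1, 1, 0, 1)" "letter_mat (-2) = (1, -1, 0, 1)"
  by (simp_all add: letter_mat.simps)

lemma braid_img_Nil [simp]: "braid_img [] = mid"
  by (simp add: braid_img_def)

lemma braid_img_Cons: "braid_img (i # w) = mmul (letter_mat i) (braid_img w)"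
  by (simp add: braid_img_def)

lemma braid_img_append: "braid_img (u @ v) = mmul (braid_img u) (braid_img v)"
  by (induction u) (simp_all add: braid_img_Cons mmul_assoc)

lemma braid_eq_imp_braid_img_eq: "braid_eq u v \<Longrightarrow> braid_img u = braid_img v"
proof (induction rule: braid_eq.induct)
  case (step x y u v)
  then have "braid_img x = braid_img y"
    by (induction rule: braid_basic.induct) (auto simp: braid_img_Cons mid_def)
  then show ?case by (simp add: braid_img_append)
qed simp_all

lemma mdet_braid_img: "set w \<subseteq> letters \<Longrightarrow> mdet (braid_img w) = 1"
  by (induction w) (auto simp: braid_img_Cons mdet_mmul mid_def)

lemma matA_squared: "mmul matA matA = mneg mid"
  by (simp add: matA_def mid_def)

lemma braid_img_delta_pow: "pm_eq (braid_img (delta_pow k)) (if even k then mid else matA)"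
proof -
  have power: "pm_eq (braid_img (concat (replicate n x))) (if even n then mid else matA)"
    if "pm_eq (braid_img x) matA" for x n
  proof (induction n)
    case (Suc n)
    have "pm_eq (braid_img (concat (replicate (Suc n) x)))
                (mmul matA (if even n then mid else matA))"
      using pm_eq_mmul[OF that Suc.IH] by (simp add: braid_img_append)
    then show ?case by (cases "even n") (simp_all add: matA_squared)
  qed simp
  have "pm_eq (braid_img [1, 2, 1]) matA" "pm_eq (braid_img [-1, -2, -1]) matA"
    by (simp_all add: braid_img_Cons matA_def mid_def pm_eq_def)
  from power[OF this(1), of "nat k"] power[OF this(2), of "nat (- k)"] show ?thesis
    by (cases "0 \<le> k") (simp_all add: delta_pow_def even_nat_iff)
qed

lemma pos_word_img_entries:
  assumes "set w \<subseteq> pos_letters" "braid_img w = (a, b, c, d)"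
  shows "0 < a \<and> 0 \<le> b \<and> 0 \<le> c \<and> 0 < d"
  using assms
proof (induction w arbitrary: a b c d)
  case Nil
  then show ?case by (simp add: mid_def)
next
  case (Cons i w)
  obtain a' b' c' d' where "braid_img w = (a', b', c', d')"
    by (cases "braid_img w" rule: prod_cases4)
  with Cons show ?case by (auto simp: braid_img_Cons)
qed

lemma neg_word_img_entries:
  assumes "set w \<subseteq> neg_letters" "braid_img w = (a, b, c, d)"
  shows "0 \<le> a \<and> b \<le> 0 \<and> c \<le> 0 \<and> 0 \<le> d"
  using assms
proof (induction w arbitrary: a b c d)
  case Nil
  then show ?case by (simp add: mid_def)
next
  case (Cons i w)
  obtain a' b' c' d' where "braid_img w = (a', b', c', d')"
    by (cases "braid_img w" rule: prod_cases4)
  with Cons show ?case by (auto simp: braid_img_Cons)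
qed

(* The first letter is determined by the image: (1,0,1,1) M = (1,1,0,1) M' is impossible
   for M, M' with nonnegative entries and positive diagonal. *)
lemma braid_img_pos_word_inj:
  "set u \<subseteq> pos_letters \<Longrightarrow> set v \<subseteq> pos_letters \<Longrightarrow> braid_img u = braid_img v \<Longrightarrow> u = v"
proof (induction u arbitrary: v)
  case Nil
  show ?case
  proof (cases v)
    case (Cons j v')
    obtain a b c d where "braid_img v' = (a, b, c, d)"
      by (cases "braid_img v'" rule: prod_cases4)
    with pos_word_img_entries[OF _ this] Nil Cons show ?thesis
      by (auto simp: braid_img_Cons mid_def)
  qed simp
next
  case (Cons i u)
  obtain a b c d where u: "braid_img u = (a, b, c, d)"
    by (cases "braid_img u" rule: prod_cases4)
  note u_pos = pos_word_img_entries[OF _ u]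
  show ?case
  proof (cases v)
    case Nil
    with Cons.prems u u_pos show ?thesis by (auto simp: braid_img_Cons mid_def)
  next
    case (Cons j v')
    obtain a' b' c' d' where v': "braid_img v' = (a', b', c', d')"
      by (cases "braid_img v'" rule: prod_cases4)
    note v'_pos = pos_word_img_entries[OF _ v']
    have "i = j \<and> braid_img u = braid_img v'"
      using Cons.prems \<open>v = j # v'\<close> u u_pos v' v'_pos by (auto simp: braid_img_Cons)
    with Cons.IH Cons.prems \<open>v = j # v'\<close> show ?thesis by auto
  qed
qed

section \<open>The Rademacher function\<close>

lemma Bpow_simps [simp]: "Bpow 0 = mid" "Bpow 1 = matB" "Bpow (-1) = matBinv"
  by (simp_all add: Bpow_def)

lemma rad_word_Cons: "rs \<noteq> [] \<Longrightarrow> rad_word (r # rs) = mmul (Bpow r) (mmul matA (rad_word rs))"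
  by (cases rs) auto

lemma rad_valid_iff:
  "rad_valid rs \<longleftrightarrow> rs \<noteq> [] \<and> hd rs \<in> {-1, 0, 1} \<and> last rs \<in> {-1, 0, 1}
     \<and> set (butlast (tl rs)) \<subseteq> {-1, 1}"
proof -
  have "butlast (tl rs) = map (\<lambda>i. rs ! Suc i) [0..<length rs - 2]"
    by (rule nth_equalityI) (auto simp: nth_butlast nth_tl)
  then have "set (butlast (tl rs)) = {rs ! i | i. 0 < i \<and> i < length rs - 1}"
    by (auto simp: gr0_conv_Suc)
  then show ?thesis
    unfolding rad_valid_def by auto
qed

lemma rad_valid_intro:
  assumes "rs \<noteq> []" "set rs \<subseteq> {-1, 0, 1}" "set (butlast (tl rs)) \<subseteq> {-1, 1}"
  shows "rad_valid rs"
proof -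
  have "hd rs \<in> {-1, 0, 1}" "last rs \<in> {-1, 0, 1}"
    using assms(2) hd_in_set[OF assms(1)] last_in_set[OF assms(1)] by blast+
  with assms show ?thesis by (simp add: rad_valid_iff)
qed

lemma rad_valid_sign_list:
  assumes "set xs \<subseteq> {-1, 1}"
  shows "rad_valid (xs @ [0])" "rad_valid (0 # xs @ [0])"
    and "xs \<noteq> [] \<Longrightarrow> rad_valid xs" "xs \<noteq> [] \<Longrightarrow> rad_valid (0 # xs)"
proof -
  have tl: "set (tl xs) \<subseteq> {-1, 1}"
    using assms by (cases xs) auto
  then show "rad_valid (xs @ [0])" "rad_valid (0 # xs @ [0])"
    using assms by (auto intro!: rad_valid_intro simp: butlast_tl)
  show "xs \<noteq> [] \<Longrightarrow> rad_valid xs" "xs \<noteq> [] \<Longrightarrow> rad_valid (0 # xs)"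
    using assms tl by (intro rad_valid_intro; fastforce dest: in_set_butlastD)+
qed

(* B A and -B\<^sup>-\<^sup>1 A are the images of \<sigma>\<^sub>2 and \<sigma>\<^sub>1\<^sup>-\<^sup>1, the letters of sign 1 and -1. *)
lemma rad_word_pos_word:
  "set w \<subseteq> pos_letters \<Longrightarrow> pm_eq (rad_word (map sgn w @ [r])) (mmul (braid_img w) (Bpow r))"
proof (induction w)
  case (Cons i w)
  have "pm_eq (mmul (Bpow (sgn i)) matA) (letter_mat i)"
    using Cons.prems by (auto simp: pm_eq_def matA_def matB_def matBinv_def)
  from pm_eq_mmul[OF this Cons.IH] Cons.prems show ?case
    by (simp add: rad_word_Cons braid_img_Cons mmul_assoc)
qed simp

(* A B and -A B\<^sup>-\<^sup>1 are the images of \<sigma>\<^sub>1 and \<sigma>\<^sub>2\<^sup>-\<^sup>1. *)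
lemma rad_word_neg_word:
  "w \<noteq> [] \<Longrightarrow> set w \<subseteq> neg_letters \<Longrightarrow>
   pm_eq (mmul matA (rad_word (map sgn w))) (braid_img w)"
proof (induction w)
  case (Cons i w)
  have i: "pm_eq (mmul matA (Bpow (sgn i))) (letter_mat i)"
    using Cons.prems by (auto simp: pm_eq_def matA_def matB_def matBinv_def)
  show ?case
  proof (cases "w = []")
    case True
    with i show ?thesis by (simp add: braid_img_Cons)
  next
    case False
    from pm_eq_mmul[OF i Cons.IH[OF False]] False Cons.prems show ?thesis
      by (simp add: rad_word_Cons braid_img_Cons mmul_assoc)
  qed
qed simp

lemma rad_word_one_signed:
  assumes "one_signed w"
  shows "\<exists>rs. rad_valid rs \<and> pm_eq (rad_word rs) (mmul (if p then matA else mid) (braid_img w))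
              \<and> sum_list rs = exp_sum w"
proof (cases "set w \<subseteq> pos_letters")
  case True
  then have "set (map sgn w) \<subseteq> {-1, 1}" by auto
  note valid = rad_valid_sign_list(1,2)[OF this]
  show ?thesis
  proof (cases p)
    case False
    with valid rad_word_pos_word[OF True, of 0] show ?thesis
      by (intro exI[of _ "map sgn w @ [0]"]) (simp add: exp_sum_def)
  next
    case p: True
    from pm_eq_mmul[OF pm_eq_refl rad_word_pos_word[OF True, of 0], of matA]
    have "pm_eq (rad_word (0 # map sgn w @ [0])) (mmul matA (braid_img w))"
      by (simp add: rad_word_Cons)
    with valid p show ?thesis
      by (intro exI[of _ "0 # map sgn w @ [0]"]) (simp add: exp_sum_def)
  qed
next
  case False
  with assms have neg: "set w \<subseteq> neg_letters" and "w \<noteq> []"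
    by (auto simp: one_signed_def)
  then have "set (map sgn w) \<subseteq> {-1, 1}" "map sgn w \<noteq> []" by auto
  note valid = rad_valid_sign_list(3,4)[OF this]
  note img = rad_word_neg_word[OF \<open>w \<noteq> []\<close> neg]
  show ?thesis
  proof (cases p)
    case False
    with valid img \<open>w \<noteq> []\<close> show ?thesis
      by (intro exI[of _ "0 # map sgn w"]) (simp add: rad_word_Cons exp_sum_def)
  next
    case True
    from pm_eq_mmul[OF pm_eq_refl img, of matA]
    have "pm_eq (rad_word (map sgn w)) (mmul matA (braid_img w))"
      by (simp flip: mmul_assoc add: matA_squared)
    with valid True show ?thesis
      by (intro exI[of _ "map sgn w"]) (simp add: exp_sum_def)
  qed
qed

lemma sign_list_split:
  assumes "xs \<noteq> []" "set (butlast xs) \<subseteq> {-1, 1}" "last xs \<in> {-1, 0, 1}"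
  shows "\<exists>w r. set w \<subseteq> pos_letters \<and> r \<in> {-1, 0, 1} \<and> xs = map sgn w @ [r]"
proof (intro exI conjI)
  let ?w = "map (\<lambda>x. if x = 1 then 2 else -1) (butlast xs)"
  show "set ?w \<subseteq> pos_letters" by auto
  have "map sgn ?w = butlast xs"
    using assms(2) by (auto intro!: map_idI)
  then show "xs = map sgn ?w @ [last xs]"
    using assms(1) by simp
qed (use assms(3) in simp)

lemma rad_word_decompose:
  assumes "rad_valid rs"
  shows "\<exists>p w r. set w \<subseteq> pos_letters \<and> r \<in> {-1, 0, 1} \<and> sum_list rs = exp_sum w + r \<and>
           pm_eq (rad_word rs) (mmul (if p then matA else mid) (mmul (braid_img w) (Bpow r)))"
proof -
  from assms obtain r0 t where rs: "rs = r0 # t" and hd: "r0 \<in> {-1, 0, 1}"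
    and last: "last rs \<in> {-1, 0, 1}" and mid: "set (butlast t) \<subseteq> {-1, 1}"
    by (cases rs) (auto simp: rad_valid_iff)
  show ?thesis
  proof (cases "r0 = 0 \<and> t \<noteq> []")
    case True
    with last mid rs obtain w r where "set w \<subseteq> pos_letters" "r \<in> {-1, 0, 1}" "t = map sgn w @ [r]"
      using sign_list_split[of t] by auto
    with rs True rad_word_pos_word[of w r] show ?thesis
      by (intro exI[of _ True] exI[of _ w] exI[of _ r])
        (auto simp: rad_word_Cons exp_sum_def intro: pm_eq_mmul)
  next
    case False
    with hd mid rs have "set (butlast rs) \<subseteq> {-1, 1}"
      by (cases t) auto
    with last rs obtain w r where "set w \<subseteq> pos_letters" "r \<in> {-1, 0, 1}" "rs = map sgn w @ [r]"
      using sign_list_split[of rs] by auto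
    with rad_word_pos_word[of w r] show ?thesis
      by (intro exI[of _ False] exI[of _ w] exI[of _ r]) (auto simp: exp_sum_def)
  qed
qed

lemma pm_eq_rademacher_form_cancel:
  assumes "set w \<subseteq> pos_letters" "set w' \<subseteq> pos_letters" "r \<in> {-1, 0, 1}" "r' \<in> {-1, 0, 1}"
    and "pm_eq (mmul (if p then matA else mid) (mmul (braid_img w) (Bpow r)))
               (mmul (if p' then matA else mid) (mmul (braid_img w') (Bpow r')))"
  shows "r = r' \<and> braid_img w = braid_img w'"
proof -
  obtain a b c d where w: "braid_img w = (a, b, c, d)"
    by (cases "braid_img w" rule: prod_cases4)
  obtain a' b' c' d' where w': "braid_img w' = (a', b', c', d')"
    by (cases "braid_img w'" rule: prod_cases4)
  from assms pos_word_img_entries[OF assms(1) w] pos_word_img_entries[OF assms(2) w'] show ?thesis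
    unfolding w w' by (auto simp: pm_eq_def matA_def mid_def matB_def matBinv_def split: if_splits)
qed

lemma rad_valid_sum_unique:
  assumes "rad_valid rs" "rad_valid rs'" "pm_eq (rad_word rs) (rad_word rs')"
  shows "sum_list rs = sum_list rs'"
proof -
  obtain p w r where w: "set w \<subseteq> pos_letters" "r \<in> {-1, 0, 1}" "sum_list rs = exp_sum w + r"
    and rs: "pm_eq (rad_word rs)
               (mmul (if p then matA else mid) (mmul (braid_img w) (Bpow r)))"
    using rad_word_decompose[OF assms(1)] by blast
  obtain p' w' r' where w': "set w' \<subseteq> pos_letters" "r' \<in> {-1, 0, 1}" "sum_list rs' = exp_sum w' + r'"
    and rs': "pm_eq (rad_word rs')
                (mmul (if p' then matA else mid) (mmul (braid_img w') (Bpow r')))"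
    using rad_word_decompose[OF assms(2)] by blast
  have "r = r' \<and> braid_img w = braid_img w'"
    using pm_eq_rademacher_form_cancel[OF w(1) w'(1) w(2) w'(2)]
      pm_eq_trans[OF pm_eq_trans[OF pm_eq_sym[OF rs] assms(3)] rs'] by blast
  with braid_img_pos_word_inj[OF w(1) w'(1)] w(3) w'(3) show ?thesis by simp
qed

lemma Rademacher_eq_sum_list:
  assumes "rad_valid rs" "pm_eq (rad_word rs) g"
  shows "Rademacher g = sum_list rs"
  unfolding Rademacher_def
proof (rule the_equality)
  fix s assume "\<exists>rs'. rad_valid rs' \<and> pm_eq (rad_word rs') g \<and> s = sum_list rs'"
  then obtain rs' where "rad_valid rs'" "pm_eq (rad_word rs') g" "s = sum_list rs'" by blast
  with assms rad_valid_sum_unique[of rs rs'] show "s = sum_list rs"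
    by (metis pm_eq_sym pm_eq_trans)
qed (use assms in blast)

lemma Rademacher_pm_eq: "pm_eq M N \<Longrightarrow> Rademacher M = Rademacher N"
  unfolding Rademacher_def by (metis pm_eq_sym pm_eq_trans)

section \<open>The rotation number\<close>

lemma qvals_uminus: "qvals (- p) q = uminus ` qvals p q" "qvals p (- q) = uminus ` qvals p q"
  by (auto simp: qvals_def)

lemma qvals_slopes_ordered:
  fixes a b c d :: int
  assumes "0 \<le> a" "0 \<le> b" "0 \<le> c" "0 \<le> d" "a * d - b * c = 1"
  shows "\<exists>x \<in> qvals c a. \<exists>y \<in> qvals d b. 0 \<le> x \<and> x < y"
proof -
  have "0 \<le> b * c" using assms by simp
  with assms have a: "0 < a" by (cases "a = 0") auto
  let ?x = "ereal (real_of_int c / real_of_int a)"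
  have x: "?x \<in> qvals c a" "0 \<le> ?x" using a assms(3) by (simp_all add: qvals_def)
  show ?thesis
  proof (cases "b = 0")
    case True
    with x show ?thesis by (auto simp: qvals_def)
  next
    case False
    with assms(2) have b: "0 < b" by simp
    have "real_of_int b * real_of_int c < real_of_int a * real_of_int d"
      using assms(5) by (simp flip: of_int_mult)
    with a b have "?x < ereal (real_of_int d / real_of_int b)"
      by (simp add: field_simps)
    with x b show ?thesis by (auto simp: qvals_def)
  qed
qed

lemma rot_case_nonneg:
  assumes "0 \<le> a" "0 \<le> b" "0 \<le> c" "0 \<le> d" "mdet (a, b, c, d) = 1"
  shows "rot_case 1 (a, b, c, d)" "rot_case 2 (mmul matA (a, b, c, d))"
proof -
  show "rot_case 1 (a, b, c, d)"
    using qvals_slopes_ordered[of a b c d] assms by auto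
  obtain x y where "x \<in> qvals b d" "y \<in> qvals a c" "0 \<le> x" "x < y"
    using qvals_slopes_ordered[of d c b a] assms by (auto simp: algebra_simps)
  then have "-y \<in> qvals (-a) c" "-x \<in> qvals (-b) d" "-y < -x" "-x \<le> 0"
    by (auto simp: qvals_uminus)
  then have "\<exists>x \<in> qvals (-a) c. \<exists>y \<in> qvals (-b) d. x < y \<and> y \<le> 0"
    by blast
  then show "rot_case 2 (mmul matA (a, b, c, d))"
    by (simp add: matA_def)
qed

lemma rot_case_offdiag_nonpos:
  assumes "0 \<le> a" "b \<le> 0" "c \<le> 0" "0 \<le> d" "mdet (a, b, c, d) = 1"
  shows "rot_case 4 (a, b, c, d)" "rot_case 3 (mmul matA (a, b, c, d))"
proof -
  obtain x y where "x \<in> qvals (-c) a" "y \<in> qvals d (-b)" "0 \<le> x" "x < y"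
    using qvals_slopes_ordered[of a "-b" "-c" d] assms by auto
  then have "-x \<in> qvals c a" "-y \<in> qvals d b" "-y < -x" "-x \<le> 0"
    by (auto simp: qvals_uminus)
  then have "\<exists>x \<in> qvals c a. \<exists>y \<in> qvals d b. y < x \<and> x \<le> 0"
    by blast
  then show "rot_case 4 (a, b, c, d)"
    by auto
  show "rot_case 3 (mmul matA (a, b, c, d))"
    using qvals_slopes_ordered[of d "-c" "-b" a] assms
    by (auto simp: matA_def qvals_uminus algebra_simps)
qed

lemma rot_case_pos_word:
  assumes "set w \<subseteq> pos_letters"
  shows "rot_case 1 (braid_img w) \<and> rot_case 2 (mmul matA (braid_img w))"
proof -
  obtain a b c d where w: "braid_img w = (a, b, c, d)"
    by (cases "braid_img w" rule: prod_cases4)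
  moreover have "mdet (a, b, c, d) = 1"
    using assms mdet_braid_img[of w] w by auto
  ultimately show ?thesis
    using pos_word_img_entries[OF assms w] rot_case_nonneg[of a b c d] by simp
qed

lemma rot_case_neg_word:
  assumes "set w \<subseteq> neg_letters"
  shows "rot_case 4 (braid_img w) \<and> rot_case 3 (mmul matA (braid_img w))"
proof -
  obtain a b c d where w: "braid_img w = (a, b, c, d)"
    by (cases "braid_img w" rule: prod_cases4)
  moreover have "mdet (a, b, c, d) = 1"
    using assms mdet_braid_img[of w] w by auto
  ultimately show ?thesis
    using neg_word_img_entries[OF assms w] rot_case_offdiag_nonpos[of a b c d] by simp
qed

lemma rot_case_mneg [simp]: "rot_case n (mneg M) = rot_case n M"
  by (cases M rule: prod_cases4) (simp add: qvals_def)

lemma braid_img_normal_form: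
  "braid_eq s (delta_pow k @ w) \<Longrightarrow>
   pm_eq (braid_img s) (mmul (if even k then mid else matA) (braid_img w))"
  using pm_eq_mmul[OF braid_img_delta_pow pm_eq_refl, of k "braid_img w"]
  by (simp add: braid_img_append braid_eq_imp_braid_img_eq)

lemma Rademacher_braid_img_normal_form:
  assumes "braid_eq s (delta_pow k @ w)" "one_signed w"
  shows "Rademacher (braid_img s) = exp_sum w"
proof -
  obtain rs where rs: "rad_valid rs" "sum_list rs = exp_sum w"
    and "pm_eq (rad_word rs) (mmul (if even k then mid else matA) (braid_img w))"
    using rad_word_one_signed[OF assms(2), of "odd k"] by (cases "even k") auto
  with braid_img_normal_form[OF assms(1)] show ?thesis
    using Rademacher_eq_sum_list[OF rs(1)] rs(2) pm_eq_sym pm_eq_trans by metis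
qed

lemma rot_eq_exp_sum_minus_Rademacher:
  assumes "set s \<subseteq> letters"
  shows "12 * rot s = real_of_int (exp_sum s - Rademacher (braid_img s))"
proof -
  define P where "P k \<longleftrightarrow> (\<exists>w. braid_eq s (delta_pow k @ w) \<and>
      ((rot_case 1 (braid_img s) \<and> even k \<and> set w \<subseteq> {-1, 2}) \<or>
       (rot_case 2 (braid_img s) \<and> odd k \<and> set w \<subseteq> {-1, 2}) \<or>
       (rot_case 3 (braid_img s) \<and> odd k \<and> set w \<subseteq> {1, -2}) \<or>
       (rot_case 4 (braid_img s) \<and> even k \<and> set w \<subseteq> {1, -2})))" for k
  have P_determines_k: "3 * k = exp_sum s - Rademacher (braid_img s)" if "P k" for k
  proof -
    from that obtain w where w: "braid_eq s (delta_pow k @ w)" "one_signed w"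
      unfolding P_def one_signed_def by blast
    from braid_eq_imp_exp_sum_eq[OF w(1)] Rademacher_braid_img_normal_form[OF w] show ?thesis
      by (simp add: exp_sum_delta_pow)
  qed
  obtain k w where w: "braid_eq s (delta_pow k @ w)" "one_signed w"
    using braid_normal_form[OF assms] by blast
  from braid_img_normal_form[OF w(1)] have "rot_case n (braid_img s) =
      rot_case n (mmul (if even k then mid else matA) (braid_img w))" for n
    by (auto simp: pm_eq_def)
  with w rot_case_pos_word[of w] rot_case_neg_word[of w] have "P k"
    unfolding P_def one_signed_def by (cases "even k") auto
  then have "(THE k. P k) = k"
  proof (rule the_equality)
    show "k' = k" if "P k'" for k'
      using P_determines_k[OF that] P_determines_k[OF \<open>P k\<close>] by simp
  qed
  with P_determines_k[OF \<open>P k\<close>] show ?thesis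
    by (simp add: rot_def P_def[abs_def])
qed

theorem corollary3p1:
  fixes g1 g2 :: mat2 and s1 s2 :: "int list"
  assumes "mdet g1 = 1" and "mdet g2 = 1"
    and "braid_word s1" and "braid_word s2"
    and "pm_eq (braid_img s1) g1" and "pm_eq (braid_img s2) g2"
  shows "real_of_int (Rademacher g1 + Rademacher g2 - Rademacher (mmul g1 g2))
         = -12 * (rot s1 + rot s2 - rot (s1 @ s2))"
proof -
  \<comment> \<open>The determinant hypotheses are implied by the others and not needed.\<close>
  have "set s1 \<subseteq> letters" "set s2 \<subseteq> letters" "set (s1 @ s2) \<subseteq> letters"
    using assms(3,4) by (auto simp: braid_word_def)
  note rot = this[THEN rot_eq_exp_sum_minus_Rademacher]
  have "pm_eq (braid_img (s1 @ s2)) (mmul g1 g2)"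
    unfolding braid_img_append using assms(5,6) by (rule pm_eq_mmul)
  with assms(5,6) rot show ?thesis
    by (simp add: Rademacher_pm_eq algebra_simps)
qed

end
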